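(* Let $I=(N,O,\succsim)$ be a general instance, $p$ a generalized random matching and $p'$ its associated random matching for the associated instance $I'$. Then $p$ is fractionally weakly stable if and only if $p'$ is fractionally weakly stable and $p$ is non-wasteful (i.e., $p'$ respects non-wastefulness).
   Context: General instance: $N=\{1,\dots,n\}$ agents, $O=\{o_1,\dots,o_m\}$ objects ($m,n\ge1$ arbitrary), $\emptyset$ the null object; each agent $i$ has a weak order $\succsim_i$ over $O\cup\{\emptyset\}$, each object $o$ a weak order $\succsim_o$ over $N\cup\{\emptyset\}$, with either $o\succ_i\emptyset$ or $\emptyset\succ_i o$, and either $i\succ_o\emptyset$ or $\emptyset\succ_o i$. $(i,o)$ is acceptable if $o\succ_i\emptyset$ and $i\succ_o\emptyset$. A generalized random matching is an $n\times m$ nonnegative matrix with row and column sums $\le1$; write $p(\emptyset,o)=1-\sum_{i\in N}p(i,o)$. $p$ is individually rational if $p(i,o)=0$ whenever $\emptyset\succ_i o$ or $\emptyset\succ_o i$; non-wasteful if there is no acceptable $(i,o)$ with $\sum_{o':o'\succsim_i o}p(i,o')<1$ and $\sum_j p(j,o)<1$. $p$ is fractionally weakly stable if it is individually rational, non-wasteful, and for every acceptable pair $(i,o)$: $\sum_{o'\in O:o'\succsim_i o,\,o'\ne o}p(i,o')\ge\sum_{j\in N:i\succ_o j}p(j,o)+p(\emptyset,o)$. Associated instance: $D=\{d_1,\dots,d_m\}$, $\Phi=\{\phi_1,\dots,\phi_n\}$, $N'=N\cup D$, $O'=O\cup\Phi$, with weak orders (blocks best to worst, consecutive blocks strict): $i\in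 N$: objects acceptable to $i$ by $\succsim_i$, $\phi_i$, $\phi_k$ ($k\ne i$) in increasing index, objects unacceptable to $i$ by $\succsim_i$; $o_j$: agents acceptable to $o_j$ by $\succsim_{o_j}$, $d_j$, $d_k$ ($k\ne j$) in increasing index, agents unacceptable to $o_j$ by $\succsim_{o_j}$; $d_j$: $o_j$, other objects of $O$ in increasing index, then null objects with $\phi_k\succsim'_{d_j}\phi_l$ iff $k\succsim_{o_j}l$; $\phi_i$: $i$, other agents of $N$ in increasing index, then dummies with $d_k\succsim'_{\phi_i}d_l$ iff $o_k\succsim_i o_l$. Associated random matching: $p'(i,o_j)=p(i,o_j)$, $p'(d_j,\phi_i)=p(i,o_j)$, $p'(i,\phi_i)=1-\sum_o p(i,o)$, $p'(d_j,o_j)=1-\sum_i p(i,o_j)$, other entries $0$ (an $(n+m)\times(n+m)$ bistochastic matrix). A bistochastic matrix $q$ on $N'\times O'$ is fractionally weakly stable if for every $(a,c)\in N'\times O'$: $\sum_{c':c'\succsim'_a c,\,c'\ne c}q(a,c')\ge\sum_{b:a\succ'_c b}q(b,c)$. *)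

theory Defs
  imports Complex_Main
begin

(* Agents N = {1..n}, objects O = {1..m} (object o_j is index j).
   The null object / null agent is None.
   PA i x y  means  x \<succeq>_i y   (x,y :: nat option, over O \<union> {null}).
   PO j x y  means  x \<succeq>_{o_j} y (x,y :: nat option, over N \<union> {null}).
   Associated instance: N' = N \<union> D encoded as  Inl i (agent i) / Inr j (dummy d_j);
                        O' = O \<union> \<Phi> encoded as  Inl j (object o_j) / Inr i (null object phi_i). *)

definition strictly :: "('a \<Rightarrow> 'a \<Rightarrow> bool) \<Rightarrow> 'a \<Rightarrow> 'a \<Rightarrow> bool" where
  "strictly R x y \<longleftrightarrow> R x y \<and> \<not> R y x"

definition weak_order_on :: "'a set \<Rightarrow> ('a \<Rightarrow> 'a \<Rightarrow> bool) \<Rightarrow> bool" where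
  "weak_order_on A R \<longleftrightarrow>
     (\<forall>x\<in>A. \<forall>y\<in>A. R x y \<or> R y x) \<and>
     (\<forall>x\<in>A. \<forall>y\<in>A. \<forall>z\<in>A. R x y \<longrightarrow> R y z \<longrightarrow> R x z)"

definition general_instance ::
  "nat \<Rightarrow> nat \<Rightarrow> (nat \<Rightarrow> nat option \<Rightarrow> nat option \<Rightarrow> bool) \<Rightarrow>
   (nat \<Rightarrow> nat option \<Rightarrow> nat option \<Rightarrow> bool) \<Rightarrow> bool" where
  "general_instance n m PA PO \<longleftrightarrow> n \<ge> 1 \<and> m \<ge> 1 \<and>
     (\<forall>i\<in>{1..n}. weak_order_on (insert None (Some ` {1..m})) (PA i)) \<and>
     (\<forall>j\<in>{1..m}. weak_order_on (insert None (Some ` {1..n})) (PO j)) \<and>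
     (\<forall>i\<in>{1..n}. \<forall>j\<in>{1..m}. strictly (PA i) (Some j) None \<or> strictly (PA i) None (Some j)) \<and>
     (\<forall>j\<in>{1..m}. \<forall>i\<in>{1..n}. strictly (PO j) (Some i) None \<or> strictly (PO j) None (Some i))"

definition acceptable ::
  "(nat \<Rightarrow> nat option \<Rightarrow> nat option \<Rightarrow> bool) \<Rightarrow>
   (nat \<Rightarrow> nat option \<Rightarrow> nat option \<Rightarrow> bool) \<Rightarrow> nat \<Rightarrow> nat \<Rightarrow> bool" where
  "acceptable PA PO i ob \<longleftrightarrow> strictly (PA i) (Some ob) None \<and> strictly (PO ob) (Some i) None"

definition gen_random_matching :: "nat \<Rightarrow> nat \<Rightarrow> (nat \<Rightarrow> nat \<Rightarrow> real) \<Rightarrow> bool" where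
  "gen_random_matching n m p \<longleftrightarrow>
     (\<forall>i\<in>{1..n}. \<forall>j\<in>{1..m}. p i j \<ge> 0) \<and>
     (\<forall>i\<in>{1..n}. (\<Sum>j\<in>{1..m}. p i j) \<le> 1) \<and>
     (\<forall>j\<in>{1..m}. (\<Sum>i\<in>{1..n}. p i j) \<le> 1)"

definition null_prob :: "nat \<Rightarrow> (nat \<Rightarrow> nat \<Rightarrow> real) \<Rightarrow> nat \<Rightarrow> real" where
  "null_prob n p ob = 1 - (\<Sum>i\<in>{1..n}. p i ob)"

definition individually_rational ::
  "nat \<Rightarrow> nat \<Rightarrow> (nat \<Rightarrow> nat option \<Rightarrow> nat option \<Rightarrow> bool) \<Rightarrow>
   (nat \<Rightarrow> nat option \<Rightarrow> nat option \<Rightarrow> bool) \<Rightarrow> (nat \<Rightarrow> nat \<Rightarrow> real) \<Rightarrow> bool" where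
  "individually_rational n m PA PO p \<longleftrightarrow>
     (\<forall>i\<in>{1..n}. \<forall>ob\<in>{1..m}.
        (strictly (PA i) None (Some ob) \<or> strictly (PO ob) None (Some i)) \<longrightarrow> p i ob = 0)"

definition non_wasteful ::
  "nat \<Rightarrow> nat \<Rightarrow> (nat \<Rightarrow> nat option \<Rightarrow> nat option \<Rightarrow> bool) \<Rightarrow>
   (nat \<Rightarrow> nat option \<Rightarrow> nat option \<Rightarrow> bool) \<Rightarrow> (nat \<Rightarrow> nat \<Rightarrow> real) \<Rightarrow> bool" where
  "non_wasteful n m PA PO p \<longleftrightarrow>
     \<not> (\<exists>i\<in>{1..n}. \<exists>ob\<in>{1..m}. acceptable PA PO i ob \<and>
          (\<Sum>ob'\<in>{ob'\<in>{1..m}. PA i (Some ob') (Some ob)}. p i ob') < 1 \<and>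
          (\<Sum>j\<in>{1..n}. p j ob) < 1)"

definition frac_weakly_stable ::
  "nat \<Rightarrow> nat \<Rightarrow> (nat \<Rightarrow> nat option \<Rightarrow> nat option \<Rightarrow> bool) \<Rightarrow>
   (nat \<Rightarrow> nat option \<Rightarrow> nat option \<Rightarrow> bool) \<Rightarrow> (nat \<Rightarrow> nat \<Rightarrow> real) \<Rightarrow> bool" where
  "frac_weakly_stable n m PA PO p \<longleftrightarrow>
     individually_rational n m PA PO p \<and> non_wasteful n m PA PO p \<and>
     (\<forall>i\<in>{1..n}. \<forall>ob\<in>{1..m}. acceptable PA PO i ob \<longrightarrow>
        (\<Sum>ob'\<in>{ob'\<in>{1..m}. PA i (Some ob') (Some ob) \<and> ob' \<noteq> ob}. p i ob')
          \<ge> (\<Sum>j\<in>{j\<in>{1..n}. strictly (PO ob) (Some i) (Some j)}. p j ob) + null_prob n p ob)"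

definition block_rel :: "('x \<Rightarrow> nat) \<Rightarrow> ('x \<Rightarrow> 'x \<Rightarrow> bool) \<Rightarrow> 'x \<Rightarrow> 'x \<Rightarrow> bool" where
  "block_rel blk w x y \<longleftrightarrow> blk x < blk y \<or> (blk x = blk y \<and> w x y)"

fun pref_agent' ::
  "(nat \<Rightarrow> nat option \<Rightarrow> nat option \<Rightarrow> bool) \<Rightarrow>
   (nat \<Rightarrow> nat option \<Rightarrow> nat option \<Rightarrow> bool) \<Rightarrow> nat + nat \<Rightarrow> nat + nat \<Rightarrow> nat + nat \<Rightarrow> bool" where
  "pref_agent' PA PO (Inl i) =
     block_rel
       (\<lambda>c. case c of Inl j \<Rightarrow> (if strictly (PA i) (Some j) None then 0 else 3)
                    | Inr k \<Rightarrow> (if k = i then 1 else 2))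
       (\<lambda>c c'. case (c, c') of (Inl j, Inl j') \<Rightarrow> PA i (Some j) (Some j')
                           | (Inr k, Inr k') \<Rightarrow> k \<le> k'
                           | _ \<Rightarrow> True)"
| "pref_agent' PA PO (Inr j) =
     block_rel
       (\<lambda>c. case c of Inl k \<Rightarrow> (if k = j then 0 else 1) | Inr _ \<Rightarrow> 2)
       (\<lambda>c c'. case (c, c') of (Inl k, Inl k') \<Rightarrow> k \<le> k'
                           | (Inr k, Inr l) \<Rightarrow> PO j (Some k) (Some l)
                           | _ \<Rightarrow> True)"

fun pref_object' ::
  "(nat \<Rightarrow> nat option \<Rightarrow> nat option \<Rightarrow> bool) \<Rightarrow>
   (nat \<Rightarrow> nat option \<Rightarrow> nat option \<Rightarrow> bool) \<Rightarrow> nat + nat \<Rightarrow> nat + nat \<Rightarrow> nat + nat \<Rightarrow> bool" where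
  "pref_object' PA PO (Inl j) =
     block_rel
       (\<lambda>b. case b of Inl i \<Rightarrow> (if strictly (PO j) (Some i) None then 0 else 3)
                    | Inr k \<Rightarrow> (if k = j then 1 else 2))
       (\<lambda>b b'. case (b, b') of (Inl i, Inl i') \<Rightarrow> PO j (Some i) (Some i')
                           | (Inr k, Inr k') \<Rightarrow> k \<le> k'
                           | _ \<Rightarrow> True)"
| "pref_object' PA PO (Inr i) =
     block_rel
       (\<lambda>b. case b of Inl k \<Rightarrow> (if k = i then 0 else 1) | Inr _ \<Rightarrow> 2)
       (\<lambda>b b'. case (b, b') of (Inl k, Inl k') \<Rightarrow> k \<le> k'
                           | (Inr k, Inr l) \<Rightarrow> PA i (Some k) (Some l)
                           | _ \<Rightarrow> True)"

definition agents' :: "nat \<Rightarrow> nat \<Rightarrow> (nat + nat) set" where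
  "agents' n m = Inl ` {1..n} \<union> Inr ` {1..m}"

definition objects' :: "nat \<Rightarrow> nat \<Rightarrow> (nat + nat) set" where
  "objects' n m = Inl ` {1..m} \<union> Inr ` {1..n}"

fun assoc_matching :: "nat \<Rightarrow> nat \<Rightarrow> (nat \<Rightarrow> nat \<Rightarrow> real) \<Rightarrow> nat + nat \<Rightarrow> nat + nat \<Rightarrow> real" where
  "assoc_matching n m p (Inl i) (Inl j) = p i j"
| "assoc_matching n m p (Inr j) (Inr i) = p i j"
| "assoc_matching n m p (Inl i) (Inr k) = (if k = i then 1 - (\<Sum>ob\<in>{1..m}. p i ob) else 0)"
| "assoc_matching n m p (Inr j) (Inl k) = (if k = j then 1 - (\<Sum>i\<in>{1..n}. p i j) else 0)"

definition bistochastic :: "nat \<Rightarrow> nat \<Rightarrow> (nat + nat \<Rightarrow> nat + nat \<Rightarrow> real) \<Rightarrow> bool" where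
  "bistochastic n m q \<longleftrightarrow>
     (\<forall>a\<in>agents' n m. \<forall>c\<in>objects' n m. q a c \<ge> 0) \<and>
     (\<forall>a\<in>agents' n m. (\<Sum>c\<in>objects' n m. q a c) = 1) \<and>
     (\<forall>c\<in>objects' n m. (\<Sum>a\<in>agents' n m. q a c) = 1)"

definition frac_weakly_stable' ::
  "nat \<Rightarrow> nat \<Rightarrow> (nat \<Rightarrow> nat option \<Rightarrow> nat option \<Rightarrow> bool) \<Rightarrow>
   (nat \<Rightarrow> nat option \<Rightarrow> nat option \<Rightarrow> bool) \<Rightarrow> (nat + nat \<Rightarrow> nat + nat \<Rightarrow> real) \<Rightarrow> bool" where
  "frac_weakly_stable' n m PA PO q \<longleftrightarrow> bistochastic n m q \<and>
     (\<forall>a\<in>agents' n m. \<forall>c\<in>objects' n m.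
        (\<Sum>c'\<in>{c'\<in>objects' n m. pref_agent' PA PO a c' c \<and> c' \<noteq> c}. q a c')
          \<ge> (\<Sum>b\<in>{b\<in>agents' n m. strictly (pref_object' PA PO c) a b}. q b c))"

end

theory Submission
  imports Defs
begin

(* Stability of p' is one inequality per pair in N' x O', and there are four kinds of pairs.
   At an acceptable pair (i, o) it is literally the stability inequality of p.  At an
   unacceptable pair it is automatic under individual rationality: if o rejects i, the mass
   of column o below i is zero; if i rejects o, the row of i has mass 1 above o, because
   phi_i comes right after the objects acceptable to i.  Conversely, the pairs (i, phi_i)
   and (d_o, o) say exactly that p puts no mass on pairs unacceptable to i, resp. to o, so
   they force individual rationality.  The pairs (i, phi_k) with k <> i and (d_o, o') hold
   trivially, and the inequality at (d_o, phi_i) follows from the one at (i, o) because the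
   row of i and the column of o in p have mass at most 1. *)

lemma sum_Plus_filter:
  assumes "finite A" "finite B"
  shows "(\<Sum>c\<in>{c \<in> Inl ` A \<union> Inr ` B. P c}. f c) =
    (\<Sum>j\<in>A. if P (Inl j) then f (Inl j) else 0) + (\<Sum>k\<in>B. if P (Inr k) then f (Inr k) else 0)"
proof -
  have "(\<Sum>c\<in>{c \<in> Inl ` A \<union> Inr ` B. P c}. f c) = (\<Sum>c\<in>Inl ` A \<union> Inr ` B. if P c then f c else 0)"
    using assms by (intro sum.inter_filter) auto
  also have "\<dots> = (\<Sum>c\<in>Inl ` A. if P c then f c else 0) + (\<Sum>c\<in>Inr ` B. if P c then f c else 0)"
    using assms by (intro sum.union_disjoint) auto
  finally show ?thesis by (simp add: sum.reindex)
qed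

lemma sum_Plus:
  assumes "finite A" "finite B"
  shows "(\<Sum>c\<in>Inl ` A \<union> Inr ` B. f c) = (\<Sum>j\<in>A. f (Inl j)) + (\<Sum>k\<in>B. f (Inr k))"
  using assms by (subst sum.union_disjoint) (auto simp: sum.reindex)

lemma sum_nonneg_filter_le_0_imp_eq_0:
  fixes f :: "'a \<Rightarrow> real"
  assumes "finite A" "(\<Sum>l\<in>A. if P l then f l else 0) \<le> 0" "\<And>l. l \<in> A \<Longrightarrow> f l \<ge> 0"
    and "l \<in> A" "P l"
  shows "f l = 0"
proof -
  have "\<forall>l\<in>A. (if P l then f l else 0) = 0"
    using assms by (subst sum_nonneg_eq_0_iff[symmetric]) (auto intro!: sum_nonneg antisym)
  then show ?thesis using assms by auto
qed

lemma sum_split_above_at_below: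
  fixes f :: "'a \<Rightarrow> real"
  assumes "finite A" "x \<in> A" "\<And>l. l \<in> A \<Longrightarrow> R (g l) (g x) \<or> R (g x) (g l)"
  shows "sum f A = (\<Sum>l\<in>A. if R (g l) (g x) \<and> l \<noteq> x then f l else 0) + f x +
                   (\<Sum>l\<in>A. if strictly R (g x) (g l) then f l else 0)"
proof -
  have "sum f A = (\<Sum>l\<in>A. (if R (g l) (g x) \<and> l \<noteq> x then f l else 0) + (if l = x then f l else 0) +
                           (if strictly R (g x) (g l) then f l else 0))"
    using assms(3) by (intro sum.cong) (auto simp: strictly_def)
  then show ?thesis using assms(1,2) by (simp add: sum.distrib)
qed

lemma weak_order_on_total: "weak_order_on S R \<Longrightarrow> x \<in> S \<Longrightarrow> y \<in> S \<Longrightarrow> R x y \<or> R y x"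
  unfolding weak_order_on_def by blast

lemma strictly_weak_order_trans_left:
  "weak_order_on S R \<Longrightarrow> x \<in> S \<Longrightarrow> y \<in> S \<Longrightarrow> z \<in> S \<Longrightarrow> strictly R x y \<Longrightarrow> R y z \<Longrightarrow> strictly R x z"
  unfolding weak_order_on_def strictly_def by blast

lemma strictly_weak_order_trans_right:
  "weak_order_on S R \<Longrightarrow> x \<in> S \<Longrightarrow> y \<in> S \<Longrightarrow> z \<in> S \<Longrightarrow> R x y \<Longrightarrow> strictly R y z \<Longrightarrow> strictly R x z"
  unfolding weak_order_on_def strictly_def by blast

lemma strictly_asym: "strictly R x y \<Longrightarrow> \<not> strictly R y x"
  unfolding strictly_def by blast

lemma strictly_block_rel:
  "strictly (block_rel blk w) x y \<longleftrightarrow> blk x < blk y \<or> (blk x = blk y \<and> w x y \<and> \<not> w y x)"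
  unfolding strictly_def block_rel_def by auto

locale instance_with_matching =
  fixes n m :: nat
    and PA PO :: "nat \<Rightarrow> nat option \<Rightarrow> nat option \<Rightarrow> bool"
    and p :: "nat \<Rightarrow> nat \<Rightarrow> real"
  assumes general: "general_instance n m PA PO"
    and matching: "gen_random_matching n m p"
begin

abbreviation q :: "nat + nat \<Rightarrow> nat + nat \<Rightarrow> real" where
  "q \<equiv> assoc_matching n m p"

lemma PA_weak_order: "i \<in> {1..n} \<Longrightarrow> weak_order_on (insert None (Some ` {1..m})) (PA i)"
  using general unfolding general_instance_def by blast

lemma PO_weak_order: "j \<in> {1..m} \<Longrightarrow> weak_order_on (insert None (Some ` {1..n})) (PO j)"
  using general unfolding general_instance_def by blast

lemma PA_dichotomy:
  "i \<in> {1..n} \<Longrightarrow> j \<in> {1..m} \<Longrightarrow> strictly (PA i) (Some j) None \<or> strictly (PA i) None (Some j)"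
  using general unfolding general_instance_def by blast

lemma PO_dichotomy:
  "i \<in> {1..n} \<Longrightarrow> j \<in> {1..m} \<Longrightarrow> strictly (PO j) (Some i) None \<or> strictly (PO j) None (Some i)"
  using general unfolding general_instance_def by blast

lemma p_nonneg: "i \<in> {1..n} \<Longrightarrow> j \<in> {1..m} \<Longrightarrow> p i j \<ge> 0"
  using matching unfolding gen_random_matching_def by blast

lemma row_sum_le_1: "i \<in> {1..n} \<Longrightarrow> (\<Sum>j\<in>{1..m}. p i j) \<le> 1"
  using matching unfolding gen_random_matching_def by blast

lemma col_sum_le_1: "j \<in> {1..m} \<Longrightarrow> (\<Sum>i\<in>{1..n}. p i j) \<le> 1"
  using matching unfolding gen_random_matching_def by blast

lemma individually_rational_iff:
  "individually_rational n m PA PO p \<longleftrightarrow>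
    (\<forall>i\<in>{1..n}. \<forall>j\<in>{1..m}. \<not> strictly (PA i) (Some j) None \<longrightarrow> p i j = 0) \<and>
    (\<forall>i\<in>{1..n}. \<forall>j\<in>{1..m}. \<not> strictly (PO j) (Some i) None \<longrightarrow> p i j = 0)"
proof -
  have "strictly (PA i) None (Some j) \<longleftrightarrow> \<not> strictly (PA i) (Some j) None"
    and "strictly (PO j) None (Some i) \<longleftrightarrow> \<not> strictly (PO j) (Some i) None"
    if "i \<in> {1..n}" "j \<in> {1..m}" for i j
    using PA_dichotomy[OF that] PO_dichotomy[OF that] strictly_asym by metis+
  then show ?thesis unfolding individually_rational_def by (auto simp del: atLeastAtMost_iff)
qed

lemma bistochastic_assoc_matching: "bistochastic n m q"
proof -
  have rows: "(\<Sum>c\<in>objects' n m. q a c) = 1" if "a \<in> agents' n m" for a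
  proof -
    from that consider i where "i \<in> {1..n}" "a = Inl i" | j where "j \<in> {1..m}" "a = Inr j"
      unfolding agents'_def by blast
    then show ?thesis
    proof cases
      case 1
      then have "(\<Sum>k\<in>{1..n}. q (Inl i) (Inr k)) = 1 - (\<Sum>j\<in>{1..m}. p i j)"
        by (simp add: sum.delta[where S="{1..n}"] eq_commute[of _ i])
      with 1 show ?thesis unfolding objects'_def by (simp add: sum_Plus)
    next
      case 2
      then have "(\<Sum>k\<in>{1..m}. q (Inr j) (Inl k)) = 1 - (\<Sum>i\<in>{1..n}. p i j)"
        by (simp add: sum.delta[where S="{1..m}"] eq_commute[of _ j])
      with 2 show ?thesis unfolding objects'_def by (simp add: sum_Plus)
    qed
  qed
  have cols: "(\<Sum>a\<in>agents' n m. q a c) = 1" if "c \<in> objects' n m" for c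
  proof -
    from that consider j where "j \<in> {1..m}" "c = Inl j" | i where "i \<in> {1..n}" "c = Inr i"
      unfolding objects'_def by blast
    then show ?thesis
      by cases (simp_all add: agents'_def sum_Plus sum.delta'[where S="{1..m}"] sum.delta'[where S="{1..n}"])
  qed
  have "q a c \<ge> 0" if "a \<in> agents' n m" "c \<in> objects' n m" for a c
    using that p_nonneg row_sum_le_1 col_sum_le_1 unfolding agents'_def objects'_def by auto
  with rows cols show ?thesis unfolding bistochastic_def by blast
qed


definition row_mass_above :: "nat + nat \<Rightarrow> nat + nat \<Rightarrow> real" where
  "row_mass_above a c = (\<Sum>c'\<in>{c'\<in>objects' n m. pref_agent' PA PO a c' c \<and> c' \<noteq> c}. q a c')"

definition col_mass_below :: "nat + nat \<Rightarrow> nat + nat \<Rightarrow> real" where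
  "col_mass_below a c = (\<Sum>b\<in>{b\<in>agents' n m. strictly (pref_object' PA PO c) a b}. q b c)"

lemma frac_weakly_stable'_assoc_iff:
  "frac_weakly_stable' n m PA PO q \<longleftrightarrow>
    (\<forall>i\<in>{1..n}. \<forall>j\<in>{1..m}. col_mass_below (Inl i) (Inl j) \<le> row_mass_above (Inl i) (Inl j)) \<and>
    (\<forall>i\<in>{1..n}. \<forall>k\<in>{1..n}. col_mass_below (Inl i) (Inr k) \<le> row_mass_above (Inl i) (Inr k)) \<and>
    (\<forall>j\<in>{1..m}. \<forall>k\<in>{1..m}. col_mass_below (Inr j) (Inl k) \<le> row_mass_above (Inr j) (Inl k)) \<and>
    (\<forall>j\<in>{1..m}. \<forall>i\<in>{1..n}. col_mass_below (Inr j) (Inr i) \<le> row_mass_above (Inr j) (Inr i))"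
  unfolding frac_weakly_stable'_def row_mass_above_def col_mass_below_def agents'_def objects'_def
  using bistochastic_assoc_matching
  by (simp only: ball_Un Ball_image_comp comp_def ball_conj_distrib) blast

lemma row_mass_above_split:
  "row_mass_above a c =
    (\<Sum>j\<in>{1..m}. if pref_agent' PA PO a (Inl j) c \<and> Inl j \<noteq> c then q a (Inl j) else 0) +
    (\<Sum>k\<in>{1..n}. if pref_agent' PA PO a (Inr k) c \<and> Inr k \<noteq> c then q a (Inr k) else 0)"
  unfolding row_mass_above_def objects'_def by (rule sum_Plus_filter) auto

lemma col_mass_below_split:
  "col_mass_below a c =
    (\<Sum>i\<in>{1..n}. if strictly (pref_object' PA PO c) a (Inl i) then q (Inl i) c else 0) +
    (\<Sum>k\<in>{1..m}. if strictly (pref_object' PA PO c) a (Inr k) then q (Inr k) c else 0)"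
  unfolding col_mass_below_def agents'_def by (rule sum_Plus_filter) auto

lemma row_mass_above_nonneg: "a \<in> agents' n m \<Longrightarrow> row_mass_above a c \<ge> 0"
  using bistochastic_assoc_matching unfolding row_mass_above_def bistochastic_def
  by (intro sum_nonneg) auto

lemma col_mass_below_le_1:
  assumes "c \<in> objects' n m"
  shows "col_mass_below a c \<le> 1"
proof -
  have "col_mass_below a c \<le> (\<Sum>b\<in>agents' n m. q b c)"
    unfolding col_mass_below_def using assms bistochastic_assoc_matching
    by (intro sum_mono2) (auto simp: agents'_def bistochastic_def)
  also have "\<dots> = 1" using assms bistochastic_assoc_matching unfolding bistochastic_def by blast
  finally show ?thesis .
qed

lemma row_mass_above_agent_own_null:
  "i \<in> {1..n} \<Longrightarrow> row_mass_above (Inl i) (Inr i) =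
     (\<Sum>j\<in>{1..m}. if strictly (PA i) (Some j) None then p i j else 0)"
  unfolding row_mass_above_split
  by (subst sum.neutral[where A="{1..n}"]) (auto simp: block_rel_def intro!: sum.cong)

lemma col_mass_below_agent_own_null:
  "i \<in> {1..n} \<Longrightarrow> col_mass_below (Inl i) (Inr i) = (\<Sum>j\<in>{1..m}. p i j)"
  unfolding col_mass_below_split
  by (subst sum.neutral[where A="{1..n}"]) (auto simp: block_rel_def strictly_def intro!: sum.cong)

lemma row_mass_above_ge_acceptable_plus_null:
  assumes "i \<in> {1..n}" and "c = Inr k \<and> k \<in> {1..n} \<and> k \<noteq> i \<or>
                             c = Inl j \<and> j \<in> {1..m} \<and> \<not> strictly (PA i) (Some j) None"
  shows "row_mass_above (Inl i) c \<ge>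
    (\<Sum>l\<in>{1..m}. if strictly (PA i) (Some l) None then p i l else 0) + (1 - (\<Sum>l\<in>{1..m}. p i l))"
proof -
  have "(\<Sum>l\<in>{1..m}. if strictly (PA i) (Some l) None then p i l else 0) \<le>
    (\<Sum>l\<in>{1..m}. if pref_agent' PA PO (Inl i) (Inl l) c \<and> Inl l \<noteq> c then q (Inl i) (Inl l) else 0)"
    using assms p_nonneg by (intro sum_mono) (auto simp: block_rel_def)
  moreover have "(\<Sum>k'\<in>{1..n}. if pref_agent' PA PO (Inl i) (Inr k') c \<and> Inr k' \<noteq> c then q (Inl i) (Inr k') else 0)
     = (\<Sum>k'\<in>{1..n}. if k' = i then 1 - (\<Sum>l\<in>{1..m}. p i l) else 0)"
    using assms by (intro sum.cong) (auto simp: block_rel_def)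
  ultimately show ?thesis
    unfolding row_mass_above_split using assms(1) by (simp add: sum.delta add_mono)
qed

lemma row_mass_above_dummy_own_object: "j \<in> {1..m} \<Longrightarrow> row_mass_above (Inr j) (Inl j) = 0"
  unfolding row_mass_above_split by (auto simp: block_rel_def intro!: sum.neutral)

lemma col_mass_below_dummy_own_object:
  "j \<in> {1..m} \<Longrightarrow> col_mass_below (Inr j) (Inl j) =
     (\<Sum>l\<in>{1..n}. if \<not> strictly (PO j) (Some l) None then p l j else 0)"
  unfolding col_mass_below_split
  by (subst sum.neutral[where A="{1..m}"]) (auto simp: block_rel_def strictly_def intro!: sum.cong)

lemma col_mass_below_dummy_object_eq_0:
  assumes "j \<in> {1..m}" "k \<in> {1..m}"
    and "\<forall>l\<in>{1..n}. \<not> strictly (PO k) (Some l) None \<longrightarrow> p l k = 0"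
  shows "col_mass_below (Inr j) (Inl k) = 0"
  unfolding col_mass_below_split using assms
  by (subst (1 2) sum.neutral) (auto simp: block_rel_def strictly_def split: if_splits)

lemma row_mass_above_dummy_null:
  "j \<in> {1..m} \<Longrightarrow> i \<in> {1..n} \<Longrightarrow> row_mass_above (Inr j) (Inr i) =
     (1 - (\<Sum>l\<in>{1..n}. p l j)) + (\<Sum>l\<in>{1..n}. if PO j (Some l) (Some i) \<and> l \<noteq> i then p l j else 0)"
  unfolding row_mass_above_split
  by (subst sum.cong[where B="{1..m}" and h="\<lambda>k. if k = j then 1 - (\<Sum>l\<in>{1..n}. p l j) else 0"])
    (auto simp: block_rel_def intro!: sum.cong)

lemma col_mass_below_dummy_null:
  "j \<in> {1..m} \<Longrightarrow> i \<in> {1..n} \<Longrightarrow> col_mass_below (Inr j) (Inr i) =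
     (\<Sum>l\<in>{1..m}. if strictly (PA i) (Some j) (Some l) then p i l else 0)"
  unfolding col_mass_below_split
  by (subst sum.neutral[where A="{1..n}"]) (auto simp: block_rel_def strictly_def intro!: sum.cong)

lemma col_mass_below_agent_object_eq_0:
  assumes "i \<in> {1..n}" "j \<in> {1..m}" and unacc: "\<not> strictly (PO j) (Some i) None"
    and IR: "\<forall>l\<in>{1..n}. \<not> strictly (PO j) (Some l) None \<longrightarrow> p l j = 0"
  shows "col_mass_below (Inl i) (Inl j) = 0"
proof -
  have "(\<Sum>l\<in>{1..n}. if strictly (pref_object' PA PO (Inl j)) (Inl i) (Inl l)
          then q (Inl l) (Inl j) else 0) = 0"
    using unacc IR by (intro sum.neutral) (auto simp: strictly_block_rel)
  moreover have "(\<Sum>k\<in>{1..m}. if strictly (pref_object' PA PO (Inl j)) (Inl i) (Inr k)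
          then q (Inr k) (Inl j) else 0) = 0"
    using unacc by (intro sum.neutral) (auto simp: strictly_block_rel)
  ultimately show ?thesis unfolding col_mass_below_split by simp
qed

lemma row_mass_above_acceptable:
  assumes "i \<in> {1..n}" "j \<in> {1..m}" and acc: "strictly (PA i) (Some j) None"
  shows "row_mass_above (Inl i) (Inl j) =
    (\<Sum>l\<in>{1..m}. if PA i (Some l) (Some j) \<and> l \<noteq> j then p i l else 0)"
proof -
  have above_acc: "strictly (PA i) (Some l) None" if "l \<in> {1..m}" "PA i (Some l) (Some j)" for l
    using strictly_weak_order_trans_right[OF PA_weak_order _ _ _ that(2) acc] that assms by auto
  have "(\<Sum>l\<in>{1..m}. if pref_agent' PA PO (Inl i) (Inl l) (Inl j) \<and> Inl l \<noteq> Inl j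
          then q (Inl i) (Inl l) else 0)
     = (\<Sum>l\<in>{1..m}. if PA i (Some l) (Some j) \<and> l \<noteq> j then p i l else 0)"
    using acc above_acc by (intro sum.cong) (auto simp: block_rel_def)
  moreover have "(\<Sum>k\<in>{1..n}. if pref_agent' PA PO (Inl i) (Inr k) (Inl j) \<and> Inr k \<noteq> Inl j
          then q (Inl i) (Inr k) else 0) = 0"
    using acc by (intro sum.neutral) (auto simp: block_rel_def)
  ultimately show ?thesis unfolding row_mass_above_split by simp
qed

lemma col_mass_below_acceptable:
  assumes "i \<in> {1..n}" "j \<in> {1..m}" and acc: "strictly (PO j) (Some i) None"
  shows "col_mass_below (Inl i) (Inl j) =
    (\<Sum>l\<in>{1..n}. if strictly (PO j) (Some i) (Some l) then p l j else 0) + (1 - (\<Sum>l\<in>{1..n}. p l j))"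
proof -
  have below_unacc: "strictly (PO j) (Some i) (Some l)"
    if "l \<in> {1..n}" "\<not> strictly (PO j) (Some l) None" for l
  proof -
    have "strictly (PO j) None (Some l)" using PO_dichotomy[OF that(1) assms(2)] that by blast
    then show ?thesis
      using strictly_weak_order_trans_left[OF PO_weak_order[OF assms(2)] _ _ _ acc] that assms
      unfolding strictly_def by auto
  qed
  have "(\<Sum>l\<in>{1..n}. if strictly (pref_object' PA PO (Inl j)) (Inl i) (Inl l)
          then q (Inl l) (Inl j) else 0)
     = (\<Sum>l\<in>{1..n}. if strictly (PO j) (Some i) (Some l) then p l j else 0)"
    using acc below_unacc by (intro sum.cong) (auto simp: block_rel_def strictly_def)
  moreover have "(\<Sum>k\<in>{1..m}. if strictly (pref_object' PA PO (Inl j)) (Inl i) (Inr k)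
          then q (Inr k) (Inl j) else 0)
     = (\<Sum>k\<in>{1..m}. if j = k then 1 - (\<Sum>l\<in>{1..n}. p l j) else 0)"
    using acc by (intro sum.cong) (auto simp: block_rel_def strictly_def)
  ultimately show ?thesis unfolding col_mass_below_split using assms(2) by (simp add: sum.delta)
qed

lemma p_eq_0_if_unacceptable_to_agent:
  "individually_rational n m PA PO p \<Longrightarrow> i \<in> {1..n} \<Longrightarrow> j \<in> {1..m} \<Longrightarrow>
    \<not> strictly (PA i) (Some j) None \<Longrightarrow> p i j = 0"
  unfolding individually_rational_iff by blast

lemma p_eq_0_if_unacceptable_to_object:
  "individually_rational n m PA PO p \<Longrightarrow> i \<in> {1..n} \<Longrightarrow> j \<in> {1..m} \<Longrightarrow>
    \<not> strictly (PO j) (Some i) None \<Longrightarrow> p i j = 0"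
  unfolding individually_rational_iff by blast

lemma sum_acceptable_eq_row_sum:
  "individually_rational n m PA PO p \<Longrightarrow> i \<in> {1..n} \<Longrightarrow>
    (\<Sum>l\<in>{1..m}. if strictly (PA i) (Some l) None then p i l else 0) = (\<Sum>l\<in>{1..m}. p i l)"
  using p_eq_0_if_unacceptable_to_agent by (intro sum.cong) auto

lemma frac_weakly_stable_iff_acceptable_pairs:
  "frac_weakly_stable n m PA PO p \<longleftrightarrow>
    individually_rational n m PA PO p \<and> non_wasteful n m PA PO p \<and>
    (\<forall>i\<in>{1..n}. \<forall>j\<in>{1..m}. acceptable PA PO i j \<longrightarrow>
       col_mass_below (Inl i) (Inl j) \<le> row_mass_above (Inl i) (Inl j))"
proof -
  have "(\<Sum>l\<in>{l\<in>{1..m}. PA i (Some l) (Some j) \<and> l \<noteq> j}. p i l)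
          \<ge> (\<Sum>l\<in>{l\<in>{1..n}. strictly (PO j) (Some i) (Some l)}. p l j) + null_prob n p j
       \<longleftrightarrow> col_mass_below (Inl i) (Inl j) \<le> row_mass_above (Inl i) (Inl j)"
    if "i \<in> {1..n}" "j \<in> {1..m}" "acceptable PA PO i j" for i j
    using that unfolding acceptable_def null_prob_def sum.inter_filter[OF finite_atLeastAtMost]
    by (simp add: row_mass_above_acceptable col_mass_below_acceptable)
  then show ?thesis unfolding frac_weakly_stable_def by (auto simp del: atLeastAtMost_iff)
qed

lemma agent_object_condition_if_unacceptable:
  assumes IR: "individually_rational n m PA PO p" and i: "i \<in> {1..n}" and j: "j \<in> {1..m}"
    and "\<not> acceptable PA PO i j"
  shows "col_mass_below (Inl i) (Inl j) \<le> row_mass_above (Inl i) (Inl j)"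
proof (cases "strictly (PO j) (Some i) None")
  case False
  then have "col_mass_below (Inl i) (Inl j) = 0"
    using p_eq_0_if_unacceptable_to_object[OF IR] i j by (intro col_mass_below_agent_object_eq_0) auto
  then show ?thesis using row_mass_above_nonneg[of "Inl i"] i by (simp add: agents'_def)
next
  case True
  with assms have "\<not> strictly (PA i) (Some j) None" unfolding acceptable_def by blast
  then have "row_mass_above (Inl i) (Inl j) \<ge> 1"
    using row_mass_above_ge_acceptable_plus_null[OF i] sum_acceptable_eq_row_sum[OF IR i] j by force
  moreover have "col_mass_below (Inl i) (Inl j) \<le> 1" using j by (intro col_mass_below_le_1) (simp add: objects'_def)
  ultimately show ?thesis by linarith
qed

lemma agent_null_condition:
  assumes IR: "individually_rational n m PA PO p" and i: "i \<in> {1..n}" and k: "k \<in> {1..n}"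
  shows "col_mass_below (Inl i) (Inr k) \<le> row_mass_above (Inl i) (Inr k)"
proof (cases "k = i")
  case True
  then show ?thesis
    using row_mass_above_agent_own_null col_mass_below_agent_own_null sum_acceptable_eq_row_sum[OF IR]
      i by simp
next
  case False
  then have "row_mass_above (Inl i) (Inr k) \<ge> 1"
    using row_mass_above_ge_acceptable_plus_null[OF i] sum_acceptable_eq_row_sum[OF IR i] k by force
  moreover have "col_mass_below (Inl i) (Inr k) \<le> 1" using k by (intro col_mass_below_le_1) (simp add: objects'_def)
  ultimately show ?thesis by linarith
qed

lemma dummy_object_condition:
  assumes IR: "individually_rational n m PA PO p" and "j \<in> {1..m}" "k \<in> {1..m}"
  shows "col_mass_below (Inr j) (Inl k) \<le> row_mass_above (Inr j) (Inl k)"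
proof -
  have "col_mass_below (Inr j) (Inl k) = 0"
    using assms p_eq_0_if_unacceptable_to_object[OF IR] by (intro col_mass_below_dummy_object_eq_0) auto
  then show ?thesis using row_mass_above_nonneg[of "Inr j"] assms by (simp add: agents'_def)
qed

lemma dummy_null_condition_if_acceptable:
  assumes i: "i \<in> {1..n}" and j: "j \<in> {1..m}" and acc: "acceptable PA PO i j"
    and stable: "col_mass_below (Inl i) (Inl j) \<le> row_mass_above (Inl i) (Inl j)"
  shows "col_mass_below (Inr j) (Inr i) \<le> row_mass_above (Inr j) (Inr i)"
proof -
  have accA: "strictly (PA i) (Some j) None" and accO: "strictly (PO j) (Some i) None"
    using acc unfolding acceptable_def by auto
  have row: "(\<Sum>l\<in>{1..m}. p i l) = (\<Sum>l\<in>{1..m}. if PA i (Some l) (Some j) \<and> l \<noteq> j then p i l else 0)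
      + p i j + (\<Sum>l\<in>{1..m}. if strictly (PA i) (Some j) (Some l) then p i l else 0)"
    using j weak_order_on_total[OF PA_weak_order[OF i]] by (intro sum_split_above_at_below) auto
  have col: "(\<Sum>l\<in>{1..n}. p l j) = (\<Sum>l\<in>{1..n}. if PO j (Some l) (Some i) \<and> l \<noteq> i then p l j else 0)
      + p i j + (\<Sum>l\<in>{1..n}. if strictly (PO j) (Some i) (Some l) then p l j else 0)"
    using i weak_order_on_total[OF PO_weak_order[OF j]] by (intro sum_split_above_at_below) auto
  show ?thesis
    using stable row col row_sum_le_1[OF i] col_sum_le_1[OF j]
    unfolding row_mass_above_acceptable[OF i j accA] col_mass_below_acceptable[OF i j accO]
      row_mass_above_dummy_null[OF j i] col_mass_below_dummy_null[OF j i]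
    by linarith
qed

lemma dummy_null_condition:
  assumes IR: "individually_rational n m PA PO p" and i: "i \<in> {1..n}" and j: "j \<in> {1..m}"
    and stable: "acceptable PA PO i j \<Longrightarrow>
                   col_mass_below (Inl i) (Inl j) \<le> row_mass_above (Inl i) (Inl j)"
  shows "col_mass_below (Inr j) (Inr i) \<le> row_mass_above (Inr j) (Inr i)"
proof (cases "strictly (PA i) (Some j) None")
  case False
  then have worse_unacc: "strictly (PA i) None (Some l)"
    if "l \<in> {1..m}" "strictly (PA i) (Some j) (Some l)" for l
    using PA_dichotomy[OF i j] strictly_weak_order_trans_left[OF PA_weak_order[OF i]] that j
    unfolding strictly_def by blast
  have "col_mass_below (Inr j) (Inr i) = 0"
    unfolding col_mass_below_dummy_null[OF j i]
    using worse_unacc p_eq_0_if_unacceptable_to_agent[OF IR i] strictly_asym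
    by (intro sum.neutral) fastforce
  then show ?thesis using row_mass_above_nonneg[of "Inr j"] j by (simp add: agents'_def)
next
  case accA: True
  show ?thesis
  proof (cases "strictly (PO j) (Some i) None")
    case False
    then have i_last: "strictly (PO j) (Some l) (Some i)"
      if "l \<in> {1..n}" "strictly (PO j) (Some l) None" for l
      using PO_dichotomy[OF i j] strictly_weak_order_trans_left[OF PO_weak_order[OF j] _ _ _ that(2)] that i
      unfolding strictly_def by auto
    have "(\<Sum>l\<in>{1..n}. if PO j (Some l) (Some i) \<and> l \<noteq> i then p l j else 0) = (\<Sum>l\<in>{1..n}. p l j)"
      using i_last p_eq_0_if_unacceptable_to_object[OF IR _ j] False
      by (intro sum.cong) (auto simp: strictly_def)
    then have "row_mass_above (Inr j) (Inr i) = 1" unfolding row_mass_above_dummy_null[OF j i] by simp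
    moreover have "col_mass_below (Inr j) (Inr i) \<le> 1"
      using i by (intro col_mass_below_le_1) (simp add: objects'_def)
    ultimately show ?thesis by linarith
  next
    case True
    with accA have "acceptable PA PO i j" unfolding acceptable_def by blast
    from i j this stable[OF this] show ?thesis by (rule dummy_null_condition_if_acceptable)
  qed
qed

lemma p_eq_0_if_unacceptable_to_agent_by_agent_null_condition:
  assumes i: "i \<in> {1..n}" and j: "j \<in> {1..m}" and unacc: "\<not> strictly (PA i) (Some j) None"
    and "col_mass_below (Inl i) (Inr i) \<le> row_mass_above (Inl i) (Inr i)"
  shows "p i j = 0"
proof -
  have "(\<Sum>l\<in>{1..m}. p i l) = (\<Sum>l\<in>{1..m}. (if strictly (PA i) (Some l) None then p i l else 0) +
                                          (if \<not> strictly (PA i) (Some l) None then p i l else 0))"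
    by (intro sum.cong) auto
  with assms(4) have "(\<Sum>l\<in>{1..m}. if \<not> strictly (PA i) (Some l) None then p i l else 0) \<le> 0"
    unfolding row_mass_above_agent_own_null[OF i] col_mass_below_agent_own_null[OF i]
    by (simp add: sum.distrib)
  then show ?thesis
    using sum_nonneg_filter_le_0_imp_eq_0[of "{1..m}" _ "p i"] p_nonneg i j unacc by auto
qed

lemma p_eq_0_if_unacceptable_to_object_by_dummy_object_condition:
  assumes i: "i \<in> {1..n}" and j: "j \<in> {1..m}" and unacc: "\<not> strictly (PO j) (Some i) None"
    and "col_mass_below (Inr j) (Inl j) \<le> row_mass_above (Inr j) (Inl j)"
  shows "p i j = 0"
proof -
  have "(\<Sum>l\<in>{1..n}. if \<not> strictly (PO j) (Some l) None then p l j else 0) \<le> 0"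
    using assms(4) unfolding row_mass_above_dummy_own_object[OF j] col_mass_below_dummy_own_object[OF j] .
  then show ?thesis
    using sum_nonneg_filter_le_0_imp_eq_0[of "{1..n}" _ "\<lambda>l. p l j"] p_nonneg i j unacc by auto
qed

lemma frac_weakly_stable_imp_assoc:
  assumes "frac_weakly_stable n m PA PO p"
  shows "frac_weakly_stable' n m PA PO q"
proof -
  from assms have IR: "individually_rational n m PA PO p"
    and stable: "\<And>i j. i \<in> {1..n} \<Longrightarrow> j \<in> {1..m} \<Longrightarrow> acceptable PA PO i j \<Longrightarrow>
                   col_mass_below (Inl i) (Inl j) \<le> row_mass_above (Inl i) (Inl j)"
    unfolding frac_weakly_stable_iff_acceptable_pairs by auto
  have "col_mass_below (Inl i) (Inl j) \<le> row_mass_above (Inl i) (Inl j)"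
    if "i \<in> {1..n}" "j \<in> {1..m}" for i j
    using stable agent_object_condition_if_unacceptable[OF IR] that by blast
  with agent_null_condition[OF IR] dummy_object_condition[OF IR] dummy_null_condition[OF IR, OF _ _ stable]
  show ?thesis unfolding frac_weakly_stable'_assoc_iff by blast
qed

lemma assoc_imp_individually_rational:
  assumes "frac_weakly_stable' n m PA PO q"
  shows "individually_rational n m PA PO p"
  unfolding individually_rational_iff
proof (intro conjI ballI impI)
  fix i j assume i: "i \<in> {1..n}" and j: "j \<in> {1..m}"
  with assms have "col_mass_below (Inl i) (Inr i) \<le> row_mass_above (Inl i) (Inr i)"
    and "col_mass_below (Inr j) (Inl j) \<le> row_mass_above (Inr j) (Inl j)"
    unfolding frac_weakly_stable'_assoc_iff by auto
  then show "\<not> strictly (PA i) (Some j) None \<Longrightarrow> p i j = 0"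
    and "\<not> strictly (PO j) (Some i) None \<Longrightarrow> p i j = 0"
    using i j by (auto intro: p_eq_0_if_unacceptable_to_agent_by_agent_null_condition
        p_eq_0_if_unacceptable_to_object_by_dummy_object_condition)
qed

end

theorem proposition29:
  fixes n m :: nat
    and PA PO :: "nat \<Rightarrow> nat option \<Rightarrow> nat option \<Rightarrow> bool"
    and p :: "nat \<Rightarrow> nat \<Rightarrow> real"
  assumes "general_instance n m PA PO"
    and "gen_random_matching n m p"
  shows "frac_weakly_stable n m PA PO p \<longleftrightarrow>
           frac_weakly_stable' n m PA PO (assoc_matching n m p) \<and> non_wasteful n m PA PO p"
proof -
  interpret instance_with_matching n m PA PO p
    using assms by unfold_locales
  have "frac_weakly_stable' n m PA PO (assoc_matching n m p) \<Longrightarrow>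
      individually_rational n m PA PO p \<and>
      (\<forall>i\<in>{1..n}. \<forall>j\<in>{1..m}. acceptable PA PO i j \<longrightarrow>
         col_mass_below (Inl i) (Inl j) \<le> row_mass_above (Inl i) (Inl j))"
    using assoc_imp_individually_rational unfolding frac_weakly_stable'_assoc_iff by blast
  with frac_weakly_stable_imp_assoc show ?thesis
    unfolding frac_weakly_stable_iff_acceptable_pairs by blast
qed

end
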